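(* For $n\ge 1$ let $p_{n,j}$ be the number of independent sets of size $j$ in the path $P_n$ on $n$ vertices, and let $T_n=\sum_{j=1}^{\lceil n/2\rceil}(-1)^{j-1}j\,p_{n,j}$. Then for every integer $k\ge 0$, $$T_{3k+1}=T_{3k+3}=(-1)^k(k+1),\qquad T_{3k+2}=(-1)^k\,2(k+1).$$
   Context: An independent set of a graph is a set of vertices no two of which are adjacent. *)

theory Defs
  imports Main
begin

definition path_adj :: "nat \<Rightarrow> nat \<Rightarrow> nat \<Rightarrow> bool" where
  "path_adj n u v \<longleftrightarrow> u \<in> {1..n} \<and> v \<in> {1..n} \<and> (v = u + 1 \<or> u = v + 1)"

definition indep_set_path :: "nat \<Rightarrow> nat set \<Rightarrow> bool" where
  "indep_set_path n S \<longleftrightarrow> S \<subseteq> {1..n} \<and> (\<forall>u\<in>S. \<forall>v\<in>S. \<not> path_adj n u v)"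

definition p_path :: "nat \<Rightarrow> nat \<Rightarrow> nat" where
  "p_path n j = card {S. indep_set_path n S \<and> card S = j}"

definition T_path :: "nat \<Rightarrow> int" where
  "T_path n = (\<Sum>j = 1..(n + 1) div 2. (-1) ^ (j - 1) * int j * int (p_path n j))"

end

theory Submission
  imports Defs "HOL-Computational_Algebra.Polynomial"
begin

text \<open>Splitting off the last vertex gives \<open>p(n+2, j+1) = p(n+1, j+1) + p(n, j)\<close>, so the
independence polynomial \<open>I(n, x) = \<Sum>j. p(n, j) x^j\<close> satisfies \<open>I(n+2) = I(n+1) + x I(n)\<close>.
As \<open>T(n)\<close> is the derivative of \<open>I(n)\<close> at \<open>-1\<close>, evaluating this recurrence and its
derivative at \<open>-1\<close> shows that \<open>a(n) = I(n, -1)\<close> satisfies \<open>a(n+2) = a(n+1) - a(n)\<close>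
(so it has period 6) and that \<open>T(n+2) = T(n+1) - T(n) + a(n)\<close>; solving these recurrences
along \<open>n = 3k\<close> gives the closed forms.\<close>

lemma indep_set_path_iff:
  "indep_set_path n S \<longleftrightarrow> S \<subseteq> {1..n} \<and> (\<forall>u\<in>S. Suc u \<notin> S)"
  unfolding indep_set_path_def path_adj_def by (smt (verit) Suc_eq_plus1 subset_iff)

lemma indep_set_path_Suc_iff:
  "Suc n \<notin> S \<Longrightarrow> indep_set_path (Suc n) S \<longleftrightarrow> indep_set_path n S"
  by (auto simp: indep_set_path_iff le_Suc_eq)

lemma indep_set_path_insert_iff:
  "Suc (Suc n) \<notin> S \<Longrightarrow>
     indep_set_path (Suc (Suc n)) (insert (Suc (Suc n)) S) \<longleftrightarrow> indep_set_path n S"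
  by (auto simp: indep_set_path_iff le_Suc_eq)

lemma finite_indep_set_path: "indep_set_path n S \<Longrightarrow> finite S"
  by (auto simp: indep_set_path_iff intro: finite_subset)

lemma finite_indep_sets_path: "finite {S. indep_set_path n S \<and> P S}"
  by (rule finite_subset[of _ "Pow {1..n}"]) (auto simp: indep_set_path_iff)

lemma indep_sets_path_Suc_Suc:
  "{S. indep_set_path (Suc (Suc n)) S \<and> card S = Suc j} =
     {S. indep_set_path (Suc n) S \<and> card S = Suc j}
     \<union> insert (Suc (Suc n)) ` {S. indep_set_path n S \<and> card S = j}"
  (is "?L = ?A \<union> insert ?m ` ?B")
proof (intro equalityI subsetI)
  fix S assume S: "S \<in> ?L"
  show "S \<in> ?A \<union> insert ?m ` ?B"
  proof (cases "?m \<in> S")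
    case True
    then have "S = insert ?m (S - {?m})" "indep_set_path n (S - {?m})"
      using S indep_set_path_insert_iff[of n "S - {?m}"] by (auto simp: insert_absorb)
    moreover have "card (S - {?m}) = j"
      using S True finite_indep_set_path by auto
    ultimately show ?thesis by blast
  next
    case False
    then show ?thesis using S indep_set_path_Suc_iff by auto
  qed
next
  fix S assume "S \<in> ?A \<union> insert ?m ` ?B"
  then show "S \<in> ?L"
  proof
    assume "S \<in> ?A"
    then show ?thesis using indep_set_path_Suc_iff[of "Suc n" S] by (auto simp: indep_set_path_iff)
  next
    assume "S \<in> insert ?m ` ?B"
    then obtain T where T: "indep_set_path n T" "card T = j" "S = insert ?m T" by auto
    moreover have "?m \<notin> T" using T(1) by (auto simp: indep_set_path_iff)
    ultimately show ?thesis using indep_set_path_insert_iff finite_indep_set_path by auto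
  qed
qed

lemma p_path_Suc_Suc: "p_path (Suc (Suc n)) (Suc j) = p_path (Suc n) (Suc j) + p_path n j"
proof -
  let ?m = "Suc (Suc n)"
  let ?A = "{S. indep_set_path (Suc n) S \<and> card S = Suc j}"
  let ?B = "{S. indep_set_path n S \<and> card S = j}"
  have disjoint: "?A \<inter> insert ?m ` ?B = {}"
    by (auto simp: indep_set_path_iff)
  have inj: "inj_on (insert ?m) ?B"
  proof (rule inj_onI)
    fix S T assume "S \<in> ?B" "T \<in> ?B" "insert ?m S = insert ?m T"
    moreover have "?m \<notin> S" "?m \<notin> T"
      using calculation by (auto simp: indep_set_path_iff)
    ultimately show "S = T" by (simp add: insert_ident)
  qed
  have "p_path ?m (Suc j) = card (?A \<union> insert ?m ` ?B)"
    unfolding p_path_def indep_sets_path_Suc_Suc ..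
  also have "\<dots> = card ?A + card (insert ?m ` ?B)"
    using disjoint by (intro card_Un_disjoint finite_indep_sets_path finite_imageI)
  also have "card (insert ?m ` ?B) = card ?B"
    using inj by (rule card_image)
  finally show ?thesis unfolding p_path_def .
qed

lemma p_path_0_right: "p_path n 0 = 1"
proof -
  have "{S. indep_set_path n S \<and> card S = 0} = {{}}"
    using finite_indep_set_path by (auto simp: indep_set_path_iff)
  then show ?thesis unfolding p_path_def by simp
qed

lemma p_path_0: "p_path 0 j = (if j = 0 then 1 else 0)"
proof -
  have "{S. indep_set_path 0 S \<and> card S = j} = (if j = 0 then {{}} else {})"
    by (auto simp: indep_set_path_iff)
  then show ?thesis unfolding p_path_def by simp
qed

lemma p_path_Suc_0: "p_path (Suc 0) j = (if j \<le> 1 then 1 else 0)"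
proof -
  have "indep_set_path (Suc 0) S \<longleftrightarrow> S = {} \<or> S = {1}" for S
    unfolding indep_set_path_iff by (auto simp: subset_singleton_iff)
  then have "{S. indep_set_path (Suc 0) S \<and> card S = j} = {S \<in> {{}, {1}}. card S = j}"
    by auto
  also have "\<dots> = (if j = 0 then {{}} else if j = 1 then {{1}} else {})"
    by auto
  finally show ?thesis unfolding p_path_def by simp
qed

lemma p_path_eq_0: "n + 1 < 2 * j \<Longrightarrow> p_path n j = 0"
proof (induction n arbitrary: j rule: induct_nat_012)
  case (ge2 n)
  then obtain i where "j = Suc i" by (cases j) auto
  with ge2 show ?case by (simp add: p_path_Suc_Suc)
qed (simp_all add: p_path_0 p_path_Suc_0)

definition indep_poly :: "nat \<Rightarrow> int poly" where
  "indep_poly n = (\<Sum>j\<le>n. monom (int (p_path n j)) j)"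

lemma coeff_indep_poly: "coeff (indep_poly n) j = int (p_path n j)"
proof (cases "j \<le> n")
  case False
  then have "p_path n j = 0" by (intro p_path_eq_0) simp
  with False show ?thesis by (simp add: indep_poly_def coeff_sum)
qed (simp add: indep_poly_def coeff_sum)

lemma indep_poly_Suc_Suc:
  "indep_poly (Suc (Suc n)) = indep_poly (Suc n) + pCons 0 (indep_poly n)"
  by (rule poly_eqI)
     (simp add: coeff_indep_poly coeff_pCons p_path_0_right p_path_Suc_Suc split: nat.split)

lemma indep_poly_0: "indep_poly 0 = 1"
  by (rule poly_eqI) (simp add: coeff_indep_poly p_path_0)

lemma indep_poly_Suc_0: "indep_poly (Suc 0) = [:1, 1:]"
  by (rule poly_eqI) (simp add: coeff_indep_poly coeff_pCons p_path_Suc_0 split: nat.split)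

lemma T_path_eq_poly_pderiv: "T_path n = poly (pderiv (indep_poly n)) (-1)"
proof -
  have pderiv_sum: "pderiv (sum f A) = (\<Sum>x\<in>A. pderiv (f x))" for f :: "nat \<Rightarrow> int poly" and A
    using higher_pderiv_sum[of 1 f A] by simp
  have "T_path n = (\<Sum>j\<le>n. (-1) ^ (j - 1) * int j * int (p_path n j))"
    unfolding T_path_def
  proof (rule sum.mono_neutral_left)
    show "\<forall>j\<in>{..n} - {1..(n + 1) div 2}. (-1) ^ (j - 1) * int j * int (p_path n j) = 0"
      by (auto simp: p_path_eq_0)
  qed auto
  also have "\<dots> = poly (pderiv (indep_poly n)) (-1)"
    by (simp add: indep_poly_def pderiv_sum poly_sum pderiv_monom poly_monom mult_ac)
  finally show ?thesis .
qed

lemma closed_form_of_coupled_recurrence: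
  fixes a t :: "nat \<Rightarrow> int"
  assumes a: "\<And>n. a (n + 2) = a (n + 1) - a n"
    and t: "\<And>n. t (n + 2) = t (n + 1) - t n + a n"
    and init: "a 0 = 1" "a 1 = 0" "t 0 = 0" "t 1 = 1"
  shows "t (3 * k + 1) = (-1) ^ k * int (k + 1)
       \<and> t (3 * k + 3) = (-1) ^ k * int (k + 1)
       \<and> t (3 * k + 2) = (-1) ^ k * (2 * int (k + 1))"
proof -
  have inv: "a (3 * k) = (-1) ^ k \<and> a (3 * k + 1) = 0
           \<and> t (3 * k) = - ((-1) ^ k * int k) \<and> t (3 * k + 1) = (-1) ^ k * int (k + 1)" for k
  proof (induction k)
    case 0
    show ?case using init by simp
  next
    case (Suc k)
    let ?s = "(-1 :: int) ^ k"
    have a2: "a (3 * k + 2) = - ?s"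
      using a[of "3 * k"] Suc.IH by simp
    have a3: "a (3 * k + 3) = - ?s"
      using a[of "3 * k + 1"] a2 Suc.IH by (simp add: eval_nat_numeral)
    have a4: "a (3 * k + 4) = 0"
      using a[of "3 * k + 2"] a2 a3 by (simp add: eval_nat_numeral)
    have t2: "t (3 * k + 2) = ?s * (2 * int (k + 1))"
      using t[of "3 * k"] Suc.IH by (simp add: algebra_simps)
    have t3: "t (3 * k + 3) = ?s * int (k + 1)"
      using t[of "3 * k + 1"] t2 Suc.IH by (simp add: eval_nat_numeral algebra_simps)
    have t4: "t (3 * k + 4) = - (?s * int (k + 2))"
      using t[of "3 * k + 2"] t2 t3 a2 by (simp add: eval_nat_numeral algebra_simps)
    show ?case using a3 a4 t3 t4 by (simp add: eval_nat_numeral algebra_simps)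
  qed
  let ?s = "(-1 :: int) ^ k"
  have t2: "t (3 * k + 2) = ?s * (2 * int (k + 1))"
    using t[of "3 * k"] inv[of k] by (simp add: algebra_simps)
  have t3: "t (3 * k + 3) = ?s * int (k + 1)"
    using t[of "3 * k + 1"] t2 inv[of k] by (simp add: eval_nat_numeral algebra_simps)
  show ?thesis using inv[of k] t2 t3 by simp
qed

theorem lemma4p4:
  fixes k :: nat
  shows "T_path (3 * k + 1) = (-1) ^ k * int (k + 1)
       \<and> T_path (3 * k + 3) = (-1) ^ k * int (k + 1)
       \<and> T_path (3 * k + 2) = (-1) ^ k * (2 * int (k + 1))"
proof (rule closed_form_of_coupled_recurrence)
  let ?a = "\<lambda>n. poly (indep_poly n) (-1 :: int)"
  show "?a (n + 2) = ?a (n + 1) - ?a n" for n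
    by (simp add: indep_poly_Suc_Suc)
  show "T_path (n + 2) = T_path (n + 1) - T_path n + ?a n" for n
    by (simp add: T_path_eq_poly_pderiv indep_poly_Suc_Suc pderiv_add pderiv_pCons)
  show "?a 0 = 1" "?a 1 = 0" "T_path 0 = 0" "T_path 1 = 1"
    by (simp_all add: indep_poly_0 indep_poly_Suc_0 T_path_eq_poly_pderiv pderiv_pCons)
qed

end
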